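(* Let $G$ be an edge-colored graph of order $n\geq 6$ such that $|CN(u)\cup CN(v)|\geq n-1$ for every pair of vertices $u$ and $v$ in $V(G)$. Then $G$ contains a rainbow $C_3$ unless $G$ is a rainbow $K_{\lceil n/2\rceil,\lfloor n/2\rfloor}$ (i.e. $G$ is a complete bipartite graph with parts of sizes $\lceil n/2\rceil,\lfloor n/2\rfloor$ all of whose edges have distinct colors).
   Context: An edge-colored graph is a finite simple graph $G$ with a map $C:E(G)\to\mathbb{N}$. For $v\in V(G)$, the color neighborhood $CN(v)$ is the set of colors assigned to edges incident to $v$. A subgraph is rainbow if all its edges have distinct colors; $C_3$ is a triangle. *)

theory Defs
  imports Main
begin

definition simple_graph :: "'a set \<Rightarrow> 'a set set \<Rightarrow> bool" where
  "simple_graph V E \<longleftrightarrow> finite V \<and> (\<forall>e\<in>E. e \<subseteq> V \<and> card e = 2)"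

definition color_nbhd :: "'a set set \<Rightarrow> ('a set \<Rightarrow> nat) \<Rightarrow> 'a \<Rightarrow> nat set" where
  "color_nbhd E C v = C ` {e \<in> E. v \<in> e}"

definition has_rainbow_triangle :: "'a set set \<Rightarrow> ('a set \<Rightarrow> nat) \<Rightarrow> bool" where
  "has_rainbow_triangle E C \<longleftrightarrow>
     (\<exists>x y z. x \<noteq> y \<and> y \<noteq> z \<and> x \<noteq> z \<and>
        {x, y} \<in> E \<and> {y, z} \<in> E \<and> {x, z} \<in> E \<and>
        C {x, y} \<noteq> C {y, z} \<and> C {y, z} \<noteq> C {x, z} \<and> C {x, y} \<noteq> C {x, z})"

definition is_rainbow_complete_bipartite ::
  "'a set \<Rightarrow> 'a set set \<Rightarrow> ('a set \<Rightarrow> nat) \<Rightarrow> nat \<Rightarrow> nat \<Rightarrow> bool" where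
  "is_rainbow_complete_bipartite V E C p q \<longleftrightarrow>
     (\<exists>A B. A \<inter> B = {} \<and> A \<union> B = V \<and> card A = p \<and> card B = q \<and>
        E = {{a, b} | a b. a \<in> A \<and> b \<in> B}) \<and> inj_on C E"

end

(*
  Assume there is no rainbow triangle. For an edge uv and a third vertex w, let the side colours
  of w be the colours of the edges wu, wv other than C(uv). Without rainbow triangles each vertex
  has at most one side colour, and CN(u) \<union> CN(v) consists of C(uv) and the side colours of the
  n - 2 other vertices; as it has at least n - 1 elements, every other vertex has exactly one side
  colour and distinct vertices have distinct ones. Consequently a vertex with two equally coloured
  edges is monochromatic, at most one vertex is monochromatic, and every triangle has a
  monochromatic vertex; together these exclude triangles altogether. In the triangle-free graph
  every vertex outside an edge is adjacent to one of its ends, which forces a complete bipartite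
  graph. Its edges at a vertex a and at a vertex b of the other part number n - 1 but carry at
  least n - 1 colours, so the colouring is rainbow, and the part sizes follow from comparing
  colour degrees with degrees.
*)

theory Submission
  imports Defs
begin

definition side_colours :: "'a set set \<Rightarrow> ('a set \<Rightarrow> nat) \<Rightarrow> 'a \<Rightarrow> 'a \<Rightarrow> 'a \<Rightarrow> nat set" where
  "side_colours E C u v w = C ` ({{u, w}, {v, w}} \<inter> E) - {C {u, v}}"

lemma finite_side_colours: "finite (side_colours E C u v w)"
  by (simp add: side_colours_def)

lemma card_UN_le_card:
  assumes "finite I" and "\<And>i. i \<in> I \<Longrightarrow> card (A i) \<le> 1"
  shows "card (\<Union>i\<in>I. A i) \<le> card I"
proof -
  have "card (\<Union>i\<in>I. A i) \<le> (\<Sum>i\<in>I. card (A i))"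
    using assms(1) by (rule card_UN_le)
  also have "\<dots> \<le> card I"
    using sum_bounded_above[of I "\<lambda>i. card (A i)" 1] assms(2) by simp
  finally show ?thesis .
qed

lemma obtain_two_distinct:
  assumes "finite X" and "2 \<le> card X"
  obtains p q where "p \<in> X" and "q \<in> X" and "p \<noteq> q"
  using assms card_le_Suc0_iff_eq[of X] by force

lemma complete_bipartite_edges_commute:
  "{{a, b} | a b. a \<in> A \<and> b \<in> B} = {{a, b} | a b. a \<in> B \<and> b \<in> A}"
  by (blast intro: insert_commute)

locale finite_simple_graph =
  fixes V :: "'a set" and E :: "'a set set"
  assumes simple: "simple_graph V E"
begin

lemma finite_V: "finite V"
  using simple by (simp add: simple_graph_def)

lemma finite_E: "finite E"
  using simple finite_V unfolding simple_graph_def by (intro finite_subset[of E "Pow V"]) auto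

lemma edge_ends: "{x, y} \<in> E \<Longrightarrow> x \<noteq> y \<and> x \<in> V \<and> y \<in> V"
  using simple unfolding simple_graph_def by (cases "x = y") auto

lemma obtain_edge_ends:
  assumes "e \<in> E"
  obtains x y where "e = {x, y}" and "x \<noteq> y" and "x \<in> V" and "y \<in> V"
proof -
  have "card e = 2"
    using simple assms by (simp add: simple_graph_def)
  then obtain x y where "e = {x, y}" and "x \<noteq> y"
    by (auto simp: card_2_iff)
  with assms that edge_ends show thesis by blast
qed

lemma obtain_other_end:
  assumes "e \<in> E" and "p \<in> e"
  obtains x where "e = {p, x}" and "x \<noteq> p" and "x \<in> V" and "p \<in> V"
  using assms by (elim obtain_edge_ends) (auto simp: insert_commute)

lemma color_nbhd_eq_image: "color_nbhd E C p = (\<lambda>x. C {p, x}) ` {x \<in> V. {p, x} \<in> E}"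
proof -
  have "{e \<in> E. p \<in> e} = (\<lambda>x. {p, x}) ` {x \<in> V. {p, x} \<in> E}"
    by (auto elim: obtain_other_end)
  then show ?thesis
    unfolding color_nbhd_def by (simp add: image_image)
qed

lemma edge_colour_in_color_nbhd: "{p, x} \<in> E \<Longrightarrow> C {p, x} \<in> color_nbhd E C p"
  unfolding color_nbhd_def by blast

lemma card_color_nbhd_le_degree: "card (color_nbhd E C p) \<le> card {x \<in> V. {p, x} \<in> E}"
  unfolding color_nbhd_eq_image using finite_V by (intro card_image_le) simp

lemma color_nbhd_union_subset:
  assumes "{u, v} \<in> E"
  shows "color_nbhd E C u \<union> color_nbhd E C v
           \<subseteq> insert (C {u, v}) (\<Union>w\<in>V - {u, v}. side_colours E C u v w)"
proof
  fix c assume "c \<in> color_nbhd E C u \<union> color_nbhd E C v"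
  then obtain p x where p: "p \<in> {u, v}" and px: "{p, x} \<in> E" and c: "c = C {p, x}" and "x \<in> V"
    unfolding color_nbhd_eq_image by blast
  show "c \<in> insert (C {u, v}) (\<Union>w\<in>V - {u, v}. side_colours E C u v w)"
  proof (cases "x \<in> {u, v}")
    case True
    with p px c edge_ends show ?thesis by (auto simp: insert_commute)
  next
    case False
    then have "c = C {u, v} \<or> c \<in> side_colours E C u v x"
      using p px c unfolding side_colours_def by (auto simp: insert_commute)
    with False \<open>x \<in> V\<close> show ?thesis by blast
  qed
qed

lemma complete_bipartite_if_triangle_free_dominating:
  assumes edge: "{u0, v0} \<in> E"
    and triangle_free: "\<And>x y z. {x, y} \<in> E \<Longrightarrow> {y, z} \<in> E \<Longrightarrow> {x, z} \<notin> E"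
    and dominating: "\<And>u v w. {u, v} \<in> E \<Longrightarrow> w \<in> V \<Longrightarrow> w \<notin> {u, v} \<Longrightarrow> {u, w} \<in> E \<or> {v, w} \<in> E"
  obtains A B where "A \<inter> B = {}" and "A \<union> B = V" and "E = {{a, b} | a b. a \<in> A \<and> b \<in> B}"
proof
  define A where "A = {x \<in> V. {x, v0} \<in> E}"
  define B where "B = {x \<in> V. {x, u0} \<in> E}"
  show disjoint: "A \<inter> B = {}"
    using triangle_free[of _ u0 v0] edge unfolding A_def B_def by blast
  have "x \<in> A \<union> B" if x: "x \<in> V" for x
  proof (cases "x \<in> {u0, v0}")
    case True
    with edge x show ?thesis unfolding A_def B_def by (auto simp: insert_commute)
  next
    case False
    with dominating[OF edge x] x show ?thesis unfolding A_def B_def by (auto simp: insert_commute)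
  qed
  then show cover: "A \<union> B = V"
    unfolding A_def B_def by blast
  have independent_A: "{x, y} \<notin> E" if "x \<in> A" "y \<in> A" for x y
    using that triangle_free[of x y v0] unfolding A_def by blast
  have independent_B: "{x, y} \<notin> E" if "x \<in> B" "y \<in> B" for x y
    using that triangle_free[of x y u0] unfolding B_def by blast
  show "E = {{a, b} | a b. a \<in> A \<and> b \<in> B}"
  proof (intro set_eqI iffI)
    fix e assume "e \<in> E"
    then obtain x y where e: "e = {x, y}" "{x, y} \<in> E" "x \<in> V" "y \<in> V"
      by (metis obtain_edge_ends)
    with cover independent_A[of x y] independent_B[of x y]
    have "x \<in> A \<and> y \<in> B \<or> y \<in> A \<and> x \<in> B" by blast
    with e show "e \<in> {{a, b} | a b. a \<in> A \<and> b \<in> B}"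
      by (blast intro: insert_commute)
  next
    fix e assume "e \<in> {{a, b} | a b. a \<in> A \<and> b \<in> B}"
    then obtain a b where e: "e = {a, b}" and a: "a \<in> A" and b: "b \<in> B" by blast
    show "e \<in> E"
    proof (cases "b = v0")
      case True
      with a e show ?thesis unfolding A_def by (simp add: insert_commute)
    next
      case False
      have "v0 \<in> B" using edge edge_ends[OF edge] unfolding B_def by (simp add: insert_commute)
      then have "{v0, b} \<notin> E" using b independent_B by simp
      moreover have "b \<notin> {a, v0}" using False a b disjoint by auto
      ultimately show ?thesis
        using dominating[of a v0 b] a b e unfolding A_def B_def by auto
    qed
  qed
qed


lemma card_incident_edges_le:
  assumes disjoint: "A \<inter> B = {}" and cover: "A \<union> B = V"
    and E_eq: "E = {{a, b} | a b. a \<in> A \<and> b \<in> B}" and a: "a \<in> A" and b: "b \<in> B"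
  shows "card {e \<in> E. a \<in> e \<or> b \<in> e} \<le> card V - 1"
proof -
  have finite_parts: "finite A" "finite B"
    using cover finite_V by (auto intro: finite_subset)
  have "{e \<in> E. a \<in> e \<or> b \<in> e} \<subseteq> (\<lambda>y. {a, y}) ` B \<union> (\<lambda>x. {x, b}) ` (A - {a})"
    unfolding E_eq using disjoint a b by auto
  then have "card {e \<in> E. a \<in> e \<or> b \<in> e} \<le> card ((\<lambda>y. {a, y}) ` B \<union> (\<lambda>x. {x, b}) ` (A - {a}))"
    using finite_parts by (intro card_mono) auto
  also have "\<dots> \<le> card ((\<lambda>y. {a, y}) ` B) + card ((\<lambda>x. {x, b}) ` (A - {a}))"
    by (rule card_Un_le)
  also have "\<dots> \<le> card B + card (A - {a})"
    using finite_parts by (intro add_mono card_image_le) auto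
  also have "\<dots> = card V - 1"
    using a finite_parts disjoint cover card_Un_disjoint[of A B] card_gt_0_iff[of A]
    by (auto simp: card_Diff_singleton)
  finally show ?thesis .
qed
end

locale colour_degree_graph = finite_simple_graph +
  fixes C :: "'a set \<Rightarrow> nat" and n :: nat
  assumes card_V: "card V = n"
    and four_le_n: "4 \<le> n"
    and colour_degree:
      "\<lbrakk>u \<in> V; v \<in> V; u \<noteq> v\<rbrakk> \<Longrightarrow> n - 1 \<le> card (color_nbhd E C u \<union> color_nbhd E C v)"
begin

lemma colour_degree_le_twice:
  assumes "p \<in> V" "q \<in> V" "p \<noteq> q"
    and "card (color_nbhd E C p) \<le> k" "card (color_nbhd E C q) \<le> k"
  shows "n - 1 \<le> 2 * k"
proof -
  have "n - 1 \<le> card (color_nbhd E C p \<union> color_nbhd E C q)"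
    using colour_degree assms(1-3) .
  also have "\<dots> \<le> card (color_nbhd E C p) + card (color_nbhd E C q)"
    by (rule card_Un_le)
  finally show ?thesis using assms(4,5) by linarith
qed

lemma monochromatic_vertex_unique:
  assumes "p \<in> V" "q \<in> V" "color_nbhd E C p \<subseteq> {a}" "color_nbhd E C q \<subseteq> {b}"
  shows "p = q"
proof (rule ccontr)
  assume "p \<noteq> q"
  moreover have "card (color_nbhd E C p) \<le> 1" "card (color_nbhd E C q) \<le> 1"
    using assms(3,4) by (auto dest!: subset_singletonD)
  ultimately have "n - 1 \<le> 2 * 1" using colour_degree_le_twice assms(1,2) by blast
  with four_le_n show False by linarith
qed

lemma edge_exists: obtains u v where "{u, v} \<in> E"
proof -
  obtain p q where "p \<in> V" "q \<in> V" "p \<noteq> q"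
    using card_V four_le_n finite_V by (elim obtain_two_distinct) auto
  have "E \<noteq> {}"
  proof
    assume "E = {}"
    then have "n - 1 \<le> 2 * 0"
      using colour_degree_le_twice[OF \<open>p \<in> V\<close> \<open>q \<in> V\<close> \<open>p \<noteq> q\<close>, where k = 0]
      by (simp add: color_nbhd_def)
    with four_le_n show False by linarith
  qed
  with that show thesis by (metis ex_in_conv obtain_edge_ends)
qed

lemma inj_on_colouring_if_complete_bipartite:
  assumes disjoint: "A \<inter> B = {}" and cover: "A \<union> B = V"
    and E_eq: "E = {{a, b} | a b. a \<in> A \<and> b \<in> B}"
  shows "inj_on C E"
proof (rule inj_onI)
  fix e1 e2 assume e1: "e1 \<in> E" and e2: "e2 \<in> E" and "C e1 = C e2"
  obtain a b1 where a: "a \<in> A" and e1_eq: "e1 = {a, b1}"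
    using e1 E_eq by blast
  obtain a2 b where b: "b \<in> B" and e2_eq: "e2 = {a2, b}"
    using e2 E_eq by blast
  define S where "S = {e \<in> E. a \<in> e \<or> b \<in> e}"
  have "card S \<le> n - 1"
    unfolding S_def card_V[symmetric] using assms a b by (rule card_incident_edges_le)
  also have "\<dots> \<le> card (color_nbhd E C a \<union> color_nbhd E C b)"
    using a b disjoint cover by (intro colour_degree) auto
  also have "color_nbhd E C a \<union> color_nbhd E C b = C ` S"
    unfolding S_def color_nbhd_def by auto
  finally have "card S \<le> card (C ` S)" .
  moreover have "finite S"
    unfolding S_def using finite_E by simp
  ultimately have "inj_on C S"
    by (simp add: card_image_le eq_card_imp_inj_on le_antisym)
  moreover have "e1 \<in> S" "e2 \<in> S"
    unfolding S_def using e1 e2 e1_eq e2_eq by auto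
  ultimately show "e1 = e2"
    using \<open>C e1 = C e2\<close> by (auto dest: inj_onD)
qed

lemma colour_degree_le_card_other_part:
  assumes disjoint: "A \<inter> B = {}" and cover: "A \<union> B = V"
    and E_eq: "E = {{a, b} | a b. a \<in> A \<and> b \<in> B}" and a: "a \<in> A"
  shows "card (color_nbhd E C a) \<le> card B"
proof -
  have "{x \<in> V. {a, x} \<in> E} \<subseteq> B"
    using disjoint a unfolding E_eq by (auto simp: doubleton_eq_iff)
  then have "card {x \<in> V. {a, x} \<in> E} \<le> card B"
    using cover finite_V by (intro card_mono) (auto intro: finite_subset)
  then show ?thesis
    using card_color_nbhd_le_degree le_trans by blast
qed

lemma two_le_part_imp_le_twice_other:
  assumes "A \<inter> B = {}" and "A \<union> B = V"
    and "E = {{a, b} | a b. a \<in> A \<and> b \<in> B}" and "2 \<le> card A"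
  shows "n - 1 \<le> 2 * card B"
proof -
  have "finite A"
    using assms(2) finite_V by (auto intro: finite_subset)
  then obtain p q where "p \<in> A" "q \<in> A" "p \<noteq> q"
    using assms(4) by (rule obtain_two_distinct)
  moreover have "p \<in> V" "q \<in> V"
    using \<open>p \<in> A\<close> \<open>q \<in> A\<close> assms(2) by auto
  ultimately show ?thesis
    using colour_degree_le_twice colour_degree_le_card_other_part[OF assms(1-3)] by blast
qed

lemma complete_bipartite_part_sizes:
  assumes "A \<inter> B = {}" and "A \<union> B = V"
    and "E = {{a, b} | a b. a \<in> A \<and> b \<in> B}"
  shows "card A = (n + 1) div 2 \<and> card B = n div 2 \<or> card B = (n + 1) div 2 \<and> card A = n div 2"
proof -
  have "card A + card B = n"
    using assms(1,2) finite_V card_V card_Un_disjoint[of A B] by (auto intro: finite_subset)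
  moreover have "2 \<le> card A \<Longrightarrow> n - 1 \<le> 2 * card B"
    using assms by (rule two_le_part_imp_le_twice_other)
  moreover have "2 \<le> card B \<Longrightarrow> n - 1 \<le> 2 * card A"
    using assms complete_bipartite_edges_commute[of A B]
    by (intro two_le_part_imp_le_twice_other) auto
  ultimately show ?thesis
    using four_le_n by presburger
qed

end

locale colour_degree_graph_without_rainbow_triangle = colour_degree_graph +
  assumes no_rainbow_triangle: "\<not> has_rainbow_triangle E C"
begin

lemma triangle_not_rainbow:
  assumes "{x, y} \<in> E" and "{y, z} \<in> E" and "{x, z} \<in> E"
  shows "C {x, y} = C {y, z} \<or> C {y, z} = C {x, z} \<or> C {x, y} = C {x, z}"
  using no_rainbow_triangle assms edge_ends unfolding has_rainbow_triangle_def by blast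

lemma card_side_colours_le_1:
  assumes uv: "{u, v} \<in> E"
  shows "card (side_colours E C u v w) \<le> 1"
proof -
  have "a = b" if "a \<in> side_colours E C u v w" "b \<in> side_colours E C u v w" for a b
  proof (cases "{u, w} \<in> E \<and> {v, w} \<in> E")
    case True
    then have "C {u, v} = C {v, w} \<or> C {v, w} = C {u, w} \<or> C {u, v} = C {u, w}"
      using triangle_not_rainbow[OF uv] by blast
    with True that show ?thesis
      unfolding side_colours_def by auto
  next
    case False
    with that show ?thesis
      unfolding side_colours_def by auto
  qed
  then show ?thesis
    using card_le_Suc0_iff_eq[OF finite_side_colours, of E C u v w] by auto
qed

lemma side_colours_not_covered:
  assumes uv: "{u, v} \<in> E" and w: "w \<in> V - {u, v}"
  shows "\<not> side_colours E C u v w \<subseteq> (\<Union>x\<in>V - {u, v} - {w}. side_colours E C u v x)"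
proof
  let ?S = "side_colours E C u v" and ?I = "V - {u, v} - {w}"
  assume "?S w \<subseteq> (\<Union>x\<in>?I. ?S x)"
  then have "(\<Union>x\<in>V - {u, v}. ?S x) = (\<Union>x\<in>?I. ?S x)"
    using w by blast
  then have "color_nbhd E C u \<union> color_nbhd E C v \<subseteq> insert (C {u, v}) (\<Union>x\<in>?I. ?S x)"
    using color_nbhd_union_subset[OF uv, where C = C] by simp
  then have "card (color_nbhd E C u \<union> color_nbhd E C v) \<le> card (insert (C {u, v}) (\<Union>x\<in>?I. ?S x))"
    using finite_V by (intro card_mono) (auto simp: finite_side_colours)
  also have "\<dots> \<le> Suc (card (\<Union>x\<in>?I. ?S x))"
    using finite_V by (simp add: card_insert_if finite_side_colours)
  also have "\<dots> \<le> Suc (card ?I)"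
    using finite_V card_side_colours_le_1[OF uv] by (simp add: card_UN_le_card)
  also have "card ?I = n - 3"
  proof -
    have "?I = V - {u, v, w}" by auto
    moreover have "card {u, v, w} = 3" "{u, v, w} \<subseteq> V"
      using edge_ends[OF uv] w by auto
    ultimately show ?thesis
      using card_V finite_V by (simp add: card_Diff_subset)
  qed
  finally have "card (color_nbhd E C u \<union> color_nbhd E C v) \<le> n - 2"
    using four_le_n by linarith
  moreover have "n - 1 \<le> card (color_nbhd E C u \<union> color_nbhd E C v)"
    using edge_ends[OF uv] by (intro colour_degree) auto
  ultimately show False
    using four_le_n by linarith
qed

lemma side_colours_singleton:
  assumes "{u, v} \<in> E" and "w \<in> V - {u, v}"
  obtains c where "side_colours E C u v w = {c}"
proof -
  obtain c where c: "c \<in> side_colours E C u v w"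
    using side_colours_not_covered[OF assms] by blast
  moreover have "\<forall>a\<in>side_colours E C u v w. \<forall>b\<in>side_colours E C u v w. a = b"
    using card_side_colours_le_1[OF assms(1), of w] card_le_Suc0_iff_eq[OF finite_side_colours, of E C u v w]
    by simp
  ultimately have "side_colours E C u v w = {c}"
    by blast
  then show thesis by (rule that)
qed

lemma inj_on_side_colours:
  assumes uv: "{u, v} \<in> E"
  shows "inj_on (side_colours E C u v) (V - {u, v})"
proof (rule inj_onI)
  fix w x assume w: "w \<in> V - {u, v}" and x: "x \<in> V - {u, v}"
    and same: "side_colours E C u v w = side_colours E C u v x"
  show "w = x"
  proof (rule ccontr)
    assume "w \<noteq> x"
    then have "side_colours E C u v w \<subseteq> (\<Union>y\<in>V - {u, v} - {w}. side_colours E C u v y)"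
      using same x by blast
    with side_colours_not_covered[OF uv w] show False ..
  qed
qed

lemma edge_dominates:
  assumes "{u, v} \<in> E" and "w \<in> V" and "w \<notin> {u, v}"
  shows "{u, w} \<in> E \<or> {v, w} \<in> E"
proof -
  obtain c where "side_colours E C u v w = {c}"
    using assms by (elim side_colours_singleton) auto
  then show ?thesis
    unfolding side_colours_def by auto
qed

(* An edge wx of another colour would give u and v the same side colour C(wu) relative to wx. *)
lemma monochromatic_star:
  assumes wu: "{w, u} \<in> E" and wv: "{w, v} \<in> E" and "u \<noteq> v" and same: "C {w, u} = C {w, v}"
  shows "color_nbhd E C w \<subseteq> {C {w, u}}"
proof
  fix c assume "c \<in> color_nbhd E C w"
  then obtain x where wx: "{w, x} \<in> E" and c: "c = C {w, x}"
    unfolding color_nbhd_eq_image by blast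
  show "c \<in> {C {w, u}}"
  proof (rule ccontr)
    assume "c \<notin> {C {w, u}}"
    then have other: "C {w, x} \<noteq> C {w, u}"
      using c by simp
    then have "u \<in> V - {w, x}" and "v \<in> V - {w, x}"
      using wu wv same edge_ends by auto
    moreover have "C {w, u} \<in> side_colours E C w x u" and "C {w, u} \<in> side_colours E C w x v"
      using wu wv other same unfolding side_colours_def by auto
    ultimately have "side_colours E C w x u = side_colours E C w x v"
      using side_colours_singleton[OF wx] by (metis singletonD)
    with inj_on_side_colours[OF wx] have "u = v"
      using \<open>u \<in> V - {w, x}\<close> \<open>v \<in> V - {w, x}\<close> by (rule inj_onD)
    with \<open>u \<noteq> v\<close> show False ..
  qed
qed

lemma triangle_has_monochromatic_vertex:
  assumes xy: "{x, y} \<in> E" and yz: "{y, z} \<in> E" and xz: "{x, z} \<in> E"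
  obtains p c where "p \<in> {x, y, z}" and "color_nbhd E C p \<subseteq> {c}"
proof -
  have "x \<noteq> y" "y \<noteq> z" "x \<noteq> z"
    using edge_ends xy yz xz by auto
  have yx: "{y, x} \<in> E" and zy: "{z, y} \<in> E" and zx: "{z, x} \<in> E"
    using xy yz xz by (simp_all add: insert_commute)
  from triangle_not_rainbow[OF xy yz xz]
  consider "C {y, x} = C {y, z}" | "C {z, x} = C {z, y}" | "C {x, y} = C {x, z}"
    by (auto simp: insert_commute)
  then show thesis
  proof cases
    case 1
    with monochromatic_star[OF yx yz \<open>x \<noteq> z\<close>] that[of y] show thesis by blast
  next
    case 2
    with monochromatic_star[OF zx zy \<open>x \<noteq> y\<close>] that[of z] show thesis by blast
  next
    case 3
    with monochromatic_star[OF xy xz \<open>y \<noteq> z\<close>] that[of x] show thesis by blast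
  qed
qed

(* A fourth vertex x gets no side colour from wx, so it is adjacent to u and v; the triangle uvx
   then has a monochromatic vertex other than w. *)
lemma no_triangle_at_monochromatic_vertex:
  assumes wu: "{w, u} \<in> E" and wv: "{w, v} \<in> E" and uv: "{u, v} \<in> E"
    and mono: "color_nbhd E C w \<subseteq> {c}"
  shows False
proof -
  have in_V: "u \<in> V" "v \<in> V" "w \<in> V"
    using edge_ends wu wv by auto
  have "\<not> V \<subseteq> {u, v, w}"
  proof
    assume "V \<subseteq> {u, v, w}"
    then have "card V \<le> card {u, v, w}"
      by (intro card_mono) auto
    also have "\<dots> \<le> 3"
      by (simp add: card_insert_if)
    finally show False
      using card_V four_le_n by linarith
  qed
  then obtain x where x: "x \<in> V" "x \<notin> {u, v, w}"
    by blast
  have towards_x: "{y, x} \<in> E" if wy: "{w, y} \<in> E" and "y \<noteq> x" for y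
  proof -
    have "x \<in> V - {w, y}"
      using x that by auto
    then obtain c' where "side_colours E C w y x = {c'}"
      using side_colours_singleton[OF wy] by blast
    moreover have "C {w, x} = C {w, y}" if "{w, x} \<in> E"
      using mono edge_colour_in_color_nbhd[OF that, where C = C]
        edge_colour_in_color_nbhd[OF wy, where C = C] by blast
    then have "C ` ({{w, x}, {y, x}} \<inter> E) \<subseteq> {C {w, y}}" if "{y, x} \<notin> E"
      using that by blast
    ultimately show ?thesis
      unfolding side_colours_def by blast
  qed
  have vx: "{v, x} \<in> E" and ux: "{u, x} \<in> E"
    using towards_x wu wv x by auto
  obtain p c' where "p \<in> {u, v, x}" and "color_nbhd E C p \<subseteq> {c'}"
    by (rule triangle_has_monochromatic_vertex[OF uv vx ux])
  moreover have "p \<in> V"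
    using \<open>p \<in> {u, v, x}\<close> in_V x by auto
  ultimately have "p = w"
    using monochromatic_vertex_unique[OF _ \<open>w \<in> V\<close> _ mono] by blast
  with \<open>p \<in> {u, v, x}\<close> x edge_ends wu wv show False
    by auto
qed

lemma triangle_free:
  assumes xy: "{x, y} \<in> E" and yz: "{y, z} \<in> E"
  shows "{x, z} \<notin> E"
proof
  assume xz: "{x, z} \<in> E"
  obtain p c where "p \<in> {x, y, z}" and "color_nbhd E C p \<subseteq> {c}"
    by (rule triangle_has_monochromatic_vertex[OF xy yz xz])
  moreover have yx: "{y, x} \<in> E" and zx: "{z, x} \<in> E" and zy: "{z, y} \<in> E"
    using xy xz yz by (simp_all add: insert_commute)
  ultimately show False
    using no_triangle_at_monochromatic_vertex[OF xy xz yz] no_triangle_at_monochromatic_vertex[OF yx yz xz]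
      no_triangle_at_monochromatic_vertex[OF zx zy xy]
    by blast
qed

lemma rainbow_complete_bipartite:
  "is_rainbow_complete_bipartite V E C ((n + 1) div 2) (n div 2)"
proof -
  obtain u v where "{u, v} \<in> E"
    by (rule edge_exists)
  then obtain A B where parts: "A \<inter> B = {}" "A \<union> B = V"
    and E_eq: "E = {{a, b} | a b. a \<in> A \<and> b \<in> B}"
    using triangle_free edge_dominates by (rule complete_bipartite_if_triangle_free_dominating)
  have "inj_on C E"
    using parts E_eq by (rule inj_on_colouring_if_complete_bipartite)
  moreover have "\<exists>A B. A \<inter> B = {} \<and> A \<union> B = V \<and> card A = (n + 1) div 2 \<and> card B = n div 2
      \<and> E = {{a, b} | a b. a \<in> A \<and> b \<in> B}"
    using complete_bipartite_part_sizes[OF parts E_eq] parts E_eq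
      complete_bipartite_edges_commute[of A B] by blast
  ultimately show ?thesis
    unfolding is_rainbow_complete_bipartite_def by blast
qed

end

theorem theorem7:
  fixes V :: "'a set" and E :: "'a set set" and C :: "'a set \<Rightarrow> nat" and n :: nat
  assumes "simple_graph V E"
    and "card V = n"
    and "n \<ge> 6"
    and "\<forall>u\<in>V. \<forall>v\<in>V. u \<noteq> v \<longrightarrow> card (color_nbhd E C u \<union> color_nbhd E C v) \<ge> n - 1"
  shows "has_rainbow_triangle E C \<or>
         is_rainbow_complete_bipartite V E C ((n + 1) div 2) (n div 2)"
proof (cases "has_rainbow_triangle E C")
  case False
  with assms interpret colour_degree_graph_without_rainbow_triangle V E C n
    by unfold_locales auto
  show ?thesis
    using rainbow_complete_bipartite by blast
qed simp

end
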